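(* Let $p_1,p_2\in\mathbb{N}$. Let $(\mathfrak{X}_{11},\mathfrak{X}_{22})$ and $(\mathfrak{X}^\star_{11},\mathfrak{X}^\star_{22})$ be random pairs on $\mathcal{S}_{++}^{p_1}\times\mathcal{S}_{++}^{p_2}$ with identical marginal distributions (i.e., $\mathfrak{X}_{11}\overset{d}{=}\mathfrak{X}^\star_{11}$ and $\mathfrak{X}_{22}\overset{d}{=}\mathfrak{X}^\star_{22}$). Suppose $\mathfrak{X}^\star_{11}$ and $\mathfrak{X}^\star_{22}$ are independent and $(\mathfrak{X}_{11},\mathfrak{X}_{22})\preceq_{\mathrm{Lt}}(\mathfrak{X}^\star_{11},\mathfrak{X}^\star_{22})$. If $f:\mathcal{S}_{++}^{p_1}\to[0,\infty)$ and $g:\mathcal{S}_{++}^{p_2}\to[0,\infty)$ are matrix-variate Bernstein functions with triplets $(A_1,0,\mu_1)$ and $(A_2,0,\mu_2)$ respectively, then \[\mathbb{E}\{f(\mathfrak{X}_{11})g(\mathfrak{X}_{22})\}\ge\mathbb{E}\{f(\mathfrak{X}^\star_{11})\}\,\mathbb{E}\{g(\mathfrak{X}^\star_{22})\},\] provided that the expectations are finite.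
   Context: $\mathcal{S}_+^q$, $\mathcal{S}_{++}^q$: symmetric nonnegative definite / positive definite real $q\times q$ matrices; $\mathrm{etr}(\cdot)=\exp\{\mathrm{tr}(\cdot)\}$. A map $g:\mathcal{S}_{++}^q\to[0,\infty)$ is a matrix-variate Bernstein function with triplet $(A,B,\mu)$ if $A,B\in\mathcal{S}_+^q$, $\mu$ is a measure on $\mathcal{S}_{++}^q$ with $\int_{\mathcal{S}_{++}^q}\min[1,\{\mathrm{tr}(X^2)\}^{1/2}]\,\mu(\mathrm{d}X)<\infty$, and $g(T)=\mathrm{tr}(A)+\mathrm{tr}(BT)+\int_{\mathcal{S}_{++}^q}\{1-\mathrm{etr}(-TX)\}\,\mu(\mathrm{d}X)$ for all $T\in\mathcal{S}_{++}^q$. For random pairs on $\mathcal{S}_+^{p_1}\times\mathcal{S}_+^{p_2}$, $(\mathfrak{X}_1,\mathfrak{X}_2)\preceq_{\mathrm{Lt}}(\mathfrak{Y}_1,\mathfrak{Y}_2)$ means $\mathbb{E}\{\mathrm{etr}(-T_1\mathfrak{X}_1)\mathrm{etr}(-T_2\mathfrak{X}_2)\}\ge\mathbb{E}\{\mathrm{etr}(-T_1\mathfrak{Y}_1)\mathrm{etr}(-T_2\mathfrak{Y}_2)\}$ for all $T_1\in\mathcal{S}_+^{p_1}$, $T_2\in\mathcal{S}_+^{p_2}$. *)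

theory Defs
  imports "HOL-Analysis.Analysis" "HOL-Probability.Probability"
begin

definition psd_mat :: "real^'n^'n \<Rightarrow> bool" where
  "psd_mat A \<longleftrightarrow> transpose A = A \<and> (\<forall>x. 0 \<le> x \<bullet> (A *v x))"

definition pd_mat :: "real^'n^'n \<Rightarrow> bool" where
  "pd_mat A \<longleftrightarrow> transpose A = A \<and> (\<forall>x. x \<noteq> 0 \<longrightarrow> 0 < x \<bullet> (A *v x))"

definition etr :: "real^'n^'n \<Rightarrow> real" where
  "etr X = exp (trace X)"

definition mv_bernstein ::
  "(real^'n^'n \<Rightarrow> real) \<Rightarrow> real^'n^'n \<Rightarrow> real^'n^'n \<Rightarrow> (real^'n^'n) measure \<Rightarrow> bool" where
  "mv_bernstein g A B \<mu> \<longleftrightarrow>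
     psd_mat A \<and> psd_mat B \<and>
     sets \<mu> = sets borel \<and>
     emeasure \<mu> {X. \<not> pd_mat X} = 0 \<and>
     (\<integral>\<^sup>+ X. ennreal (min 1 (sqrt (trace (X ** X)))) \<partial>\<mu>) < \<infinity> \<and>
     (\<forall>T. pd_mat T \<longrightarrow>
        g T = trace A + trace (B ** T) + (\<integral>X. (1 - etr (- (T ** X))) \<partial>\<mu>))"

definition lt_order ::
  "'a measure \<Rightarrow> ('a \<Rightarrow> real^'p^'p) \<Rightarrow> ('a \<Rightarrow> real^'q^'q) \<Rightarrow>
   'b measure \<Rightarrow> ('b \<Rightarrow> real^'p^'p) \<Rightarrow> ('b \<Rightarrow> real^'q^'q) \<Rightarrow> bool" where
  "lt_order M X1 X2 N Y1 Y2 \<longleftrightarrow>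
     (\<forall>T1 T2. psd_mat T1 \<longrightarrow> psd_mat T2 \<longrightarrow>
        (\<integral>x. etr (- (T1 ** X1 x)) * etr (- (T2 ** X2 x)) \<partial>M)
          \<ge> (\<integral>y. etr (- (T1 ** Y1 y)) * etr (- (T2 ** Y2 y)) \<partial>N))"

text \<open>Independence of two random variables with possibly different value spaces
  (the library's indep_var requires equal types), stated via events.\<close>
definition indep_rv :: "'a measure \<Rightarrow> 'c measure \<Rightarrow> ('a \<Rightarrow> 'c) \<Rightarrow> 'd measure \<Rightarrow> ('a \<Rightarrow> 'd) \<Rightarrow> bool" where
  "indep_rv M Ma X Mb Y \<longleftrightarrow>
     (\<forall>A\<in>sets Ma. \<forall>B\<in>sets Mb.
        measure M (X -` A \<inter> Y -` B \<inter> space M) =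
          measure M (X -` A \<inter> space M) * measure M (Y -` B \<inter> space M))"

end

theory Submission
  imports Defs
begin

text \<open>
  By the integral representations, \<open>f(T) = tr A\<^sub>1 + \<integral> (1 - etr(-TU)) \<mu>\<^sub>1(dU)\<close> and likewise for \<open>g\<close>,
  so \<open>E{f(X\<^sub>1\<^sub>1) g(X\<^sub>2\<^sub>2)}\<close> splits into a constant, two terms that only depend on one marginal,
  and the mixed term \<open>\<integral>\<integral> E{(1 - etr(-U X\<^sub>1\<^sub>1)) (1 - etr(-V X\<^sub>2\<^sub>2))} \<mu>\<^sub>1(dU) \<mu>\<^sub>2(dV)\<close>.
  The marginal terms coincide for both pairs. For fixed \<open>U, V\<close> the mixed integrand is
  \<open>1 - etr(-U X\<^sub>1\<^sub>1) - etr(-V X\<^sub>2\<^sub>2) + etr(-U X\<^sub>1\<^sub>1) etr(-V X\<^sub>2\<^sub>2)\<close>, whose expectation the Laplace transform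
  order bounds from below by the corresponding one for the starred pair, which factorises by
  independence. Tonelli's theorem integrates this bound over \<open>\<mu>\<^sub>1 \<otimes> \<mu>\<^sub>2\<close>.
\<close>

section \<open>Positive semidefinite matrices\<close>

lemma quadratic_nonneg_imp_discrim_le:
  fixes a b c :: real
  assumes nonneg: "\<And>t. 0 \<le> a + 2 * b * t + c * t\<^sup>2" and "0 \<le> c"
  shows "b\<^sup>2 \<le> a * c"
proof (cases "c = 0")
  case True
  have "b = 0"
  proof (rule ccontr)
    assume "b \<noteq> 0"
    then have "a + 2 * b * (- (a + 1) / (2 * b)) = -1" by (simp add: field_simps)
    then show False using nonneg[of "- (a + 1) / (2 * b)"] True by simp
  qed
  then show ?thesis using True by simp
next
  case False
  with \<open>0 \<le> c\<close> have "0 < c" by simp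
  have "a + 2 * b * (- b / c) + c * (- b / c)\<^sup>2 = a - b\<^sup>2 / c"
    using \<open>0 < c\<close> by (simp add: field_simps power2_eq_square)
  then have "b\<^sup>2 / c \<le> a" using nonneg[of "- b / c"] by simp
  then show ?thesis using \<open>0 < c\<close> by (simp add: field_simps mult.commute)
qed

lemma inner_matrix_vector_symmetric:
  fixes X :: "real^'n^'n"
  assumes "transpose X = X"
  shows "x \<bullet> (X *v y) = y \<bullet> (X *v x)"
  by (metis assms dot_lmul_matrix inner_commute transpose_matrix_vector)

lemma psd_mat_cauchy_schwarz:
  fixes X :: "real^'n^'n"
  assumes "psd_mat X"
  shows "(y \<bullet> (X *v x))\<^sup>2 \<le> (x \<bullet> (X *v x)) * (y \<bullet> (X *v y))"
proof (rule quadratic_nonneg_imp_discrim_le)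
  fix t :: real
  have "(x + t *\<^sub>R y) \<bullet> (X *v (x + t *\<^sub>R y))
      = x \<bullet> (X *v x) + 2 * (y \<bullet> (X *v x)) * t + (y \<bullet> (X *v y)) * t\<^sup>2"
    using inner_matrix_vector_symmetric[of X x y] assms
    by (simp add: psd_mat_def matrix_vector_right_distrib matrix_vector_mult_scaleR
        inner_add_left inner_add_right power2_eq_square algebra_simps)
  then show "0 \<le> x \<bullet> (X *v x) + 2 * (y \<bullet> (X *v x)) * t + (y \<bullet> (X *v y)) * t\<^sup>2"
    using assms by (metis psd_mat_def)
qed (use assms in \<open>simp add: psd_mat_def\<close>)

lemma psd_mat_quadratic_eq_0_imp:
  fixes X :: "real^'n^'n"
  assumes "psd_mat X" and "x \<bullet> (X *v x) = 0"
  shows "X *v x = 0"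
proof -
  have "((X *v x) \<bullet> (X *v x))\<^sup>2 \<le> (x \<bullet> (X *v x)) * ((X *v x) \<bullet> (X *v (X *v x)))"
    by (rule psd_mat_cauchy_schwarz[OF assms(1)])
  then show ?thesis using assms(2) by simp
qed

lemma pd_mat_iff_psd_mat_det:
  fixes X :: "real^'n^'n"
  shows "pd_mat X \<longleftrightarrow> psd_mat X \<and> det X \<noteq> 0"
proof -
  have "pd_mat X \<longleftrightarrow> psd_mat X \<and> (\<forall>x. X *v x = 0 \<longrightarrow> x = 0)"
  proof
    assume "pd_mat X"
    then show "psd_mat X \<and> (\<forall>x. X *v x = 0 \<longrightarrow> x = 0)"
      unfolding pd_mat_def psd_mat_def by (metis inner_zero_left inner_zero_right less_irrefl order.order_iff_strict)
  next
    assume "psd_mat X \<and> (\<forall>x. X *v x = 0 \<longrightarrow> x = 0)"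
    then show "pd_mat X"
      unfolding pd_mat_def using psd_mat_quadratic_eq_0_imp
      by (metis order.not_eq_order_implies_strict psd_mat_def)
  qed
  also have "(\<forall>x. X *v x = 0 \<longrightarrow> x = 0) \<longleftrightarrow> det X \<noteq> 0"
    by (metis invertible_det_nz invertible_left_inverse matrix_left_invertible_ker)
  finally show ?thesis .
qed

lemma pd_mat_imp_psd_mat: "pd_mat X \<Longrightarrow> psd_mat X"
  by (simp add: pd_mat_iff_psd_mat_det)

lemma pd_mat_nonzero:
  assumes "pd_mat U" shows "U \<noteq> 0"
proof
  assume "U = 0"
  have "axis undefined (1::real) \<noteq> (0::real^'n)" by (simp add: axis_eq_0_iff)
  then have "0 < axis undefined 1 \<bullet> (U *v axis undefined 1)"
    using assms by (simp add: pd_mat_def)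
  then show False using \<open>U = 0\<close> by simp
qed

lemma psd_mat_entry_commute: "psd_mat U \<Longrightarrow> U $ i $ j = U $ j $ i"
  unfolding psd_mat_def by (metis transpose_def vec_lambda_beta)

lemma matrix_vector_mult_axis_nth: "((U::real^'n^'n) *v axis k 1) $ i = U $ i $ k"
  by (simp add: matrix_vector_mult_def axis_def if_distrib cong: if_cong)

lemma inner_axis_matrix_vector_axis: "axis k 1 \<bullet> ((U::real^'n^'n) *v axis k 1) = U $ k $ k"
  by (simp add: inner_axis' matrix_vector_mult_axis_nth)

lemma psd_mat_diag_nonneg: "psd_mat U \<Longrightarrow> 0 \<le> U $ k $ k"
  unfolding psd_mat_def by (metis inner_axis_matrix_vector_axis)

lemma psd_mat_diag_eq_0_imp_row_eq_0:
  assumes "psd_mat U" and "U $ k $ k = 0"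
  shows "U $ k $ j = 0"
proof -
  have "U *v axis k 1 = 0"
    using assms by (intro psd_mat_quadratic_eq_0_imp) (simp_all add: inner_axis_matrix_vector_axis)
  then have "U $ j $ k = 0"
    by (metis matrix_vector_mult_axis_nth zero_index)
  then show ?thesis using psd_mat_entry_commute[OF assms(1)] by simp
qed

lemma psd_mat_trace_nonneg: "psd_mat A \<Longrightarrow> 0 \<le> trace A"
  unfolding trace_def by (simp add: sum_nonneg psd_mat_diag_nonneg)

section \<open>Traces of products and Borel sets of matrices\<close>

lemma trace_zero [simp]: "trace (0::real^'n^'n) = 0"
  by (simp add: trace_def)

lemma trace_uminus: "trace (- (A::real^'n^'n)) = - trace A"
  by (simp add: trace_def sum_negf)

lemma trace_matrix_mult_eq_sum:
  "trace ((X::real^'n^'n) ** U) = (\<Sum>i\<in>UNIV. \<Sum>j\<in>UNIV. X $ i $ j * U $ j $ i)"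
  by (simp add: trace_def matrix_matrix_mult_def)

lemma inner_matrix_vector_eq_sum:
  "x \<bullet> ((X::real^'n^'n) *v x) = (\<Sum>i\<in>UNIV. \<Sum>j\<in>UNIV. x $ i * X $ i $ j * x $ j)"
  by (simp add: inner_vec_def matrix_vector_mult_def sum_distrib_left mult.assoc)

lemma trace_mult_rank_one_update:
  fixes X U :: "real^'n^'n" and w :: "real^'n"
  shows "trace (X ** U) = trace (X ** (\<chi> i j. U $ i $ j - w $ i * w $ j / c)) + (w \<bullet> (X *v w)) / c"
  unfolding trace_matrix_mult_eq_sum inner_matrix_vector_eq_sum
  by (simp add: sum_subtractf sum_divide_distrib[symmetric] algebra_simps)

lemma inner_rank_one_update:
  fixes U :: "real^'n^'n" and w x :: "real^'n"
  shows "x \<bullet> ((\<chi> i j. U $ i $ j - w $ i * w $ j / c) *v x) = x \<bullet> (U *v x) - (w \<bullet> x)\<^sup>2 / c"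
proof -
  have "(w \<bullet> x)\<^sup>2 = (\<Sum>i\<in>UNIV. \<Sum>j\<in>UNIV. x $ i * (w $ i * w $ j) * x $ j)"
    by (simp add: inner_vec_def power2_eq_square sum_product algebra_simps)
  then show ?thesis
    unfolding inner_matrix_vector_eq_sum
    by (simp add: sum_divide_distrib sum_subtractf[symmetric] algebra_simps)
qed

lemma psd_mat_schur_complement:
  fixes U :: "real^'n^'n"
  assumes U: "psd_mat U" and pos: "0 < U $ k $ k"
  shows "psd_mat (\<chi> i j. U $ i $ j - U $ i $ k * U $ j $ k / U $ k $ k)"
proof -
  define w :: "real^'n" where "w = (\<chi> i. U $ i $ k)"
  have "(\<chi> i j. U $ i $ j - U $ i $ k * U $ j $ k / U $ k $ k) = (\<chi> i j. U $ i $ j - w $ i * w $ j / U $ k $ k)"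
    by (simp add: w_def)
  moreover have "psd_mat (\<chi> i j. U $ i $ j - w $ i * w $ j / U $ k $ k)"
    unfolding psd_mat_def
  proof (intro conjI allI)
    show "transpose (\<chi> i j. U $ i $ j - w $ i * w $ j / U $ k $ k) = (\<chi> i j. U $ i $ j - w $ i * w $ j / U $ k $ k)"
      by (simp add: vec_eq_iff transpose_def psd_mat_entry_commute[OF U] mult.commute)
    fix x :: "real^'n"
    have "w = U *v axis k 1" by (simp add: vec_eq_iff w_def matrix_vector_mult_axis_nth)
    then have "(w \<bullet> x)\<^sup>2 \<le> U $ k $ k * (x \<bullet> (U *v x))"
      using psd_mat_cauchy_schwarz[OF U, of x "axis k 1"] U
        inner_matrix_vector_symmetric[of U x "axis k 1"]
      by (simp add: psd_mat_def inner_axis_matrix_vector_axis inner_commute mult.commute)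
    then have "(w \<bullet> x)\<^sup>2 / U $ k $ k \<le> x \<bullet> (U *v x)" using pos by (simp add: field_simps)
    then show "0 \<le> x \<bullet> ((\<chi> i j. U $ i $ j - w $ i * w $ j / U $ k $ k) *v x)"
      by (simp add: inner_rank_one_update)
  qed
  ultimately show ?thesis by simp
qed

text \<open>Induction on the rows where \<open>U\<close> may be nonzero: subtracting \<open>w w\<^sup>T / U\<^sub>k\<^sub>k\<close>, with \<open>w\<close> the
  \<open>k\<close>-th column, clears row \<open>k\<close> and lowers \<open>tr(XU)\<close> by \<open>w\<^sup>T X w / U\<^sub>k\<^sub>k \<ge> 0\<close>.\<close>
lemma trace_mult_psd_nonneg_supported:
  fixes X U :: "real^'n^'n"
  assumes X: "psd_mat X" and "finite S" and "psd_mat U" and "\<forall>i j. i \<notin> S \<longrightarrow> U $ i $ j = 0"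
  shows "0 \<le> trace (X ** U)"
  using assms(2-4)
proof (induction S arbitrary: U rule: finite_induct)
  case empty
  then show ?case by (simp add: trace_matrix_mult_eq_sum)
next
  case (insert k S)
  note U = \<open>psd_mat U\<close> and supp = \<open>\<forall>i j. i \<notin> insert k S \<longrightarrow> U $ i $ j = 0\<close>
  show ?case
  proof (cases "U $ k $ k = 0")
    case True
    have "U $ i $ j = 0" if "i \<notin> S" for i j
      using supp that psd_mat_diag_eq_0_imp_row_eq_0[OF U True] by (cases "i = k") auto
    then show ?thesis using insert.IH U by blast
  next
    case False
    then have pos: "0 < U $ k $ k" using psd_mat_diag_nonneg[OF U, of k] by simp
    define w :: "real^'n" where "w = (\<chi> i. U $ i $ k)"
    define U' where "U' = (\<chi> i j. U $ i $ j - w $ i * w $ j / U $ k $ k)"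
    have "psd_mat U'"
      using psd_mat_schur_complement[OF U pos] by (simp add: U'_def w_def)
    moreover have "U' $ i $ j = 0" if "i \<notin> S" for i j
    proof (cases "i = k")
      case True
      then show ?thesis using pos by (simp add: U'_def w_def psd_mat_entry_commute[OF U, of j k])
    next
      case False
      then show ?thesis using supp that by (simp add: U'_def w_def)
    qed
    ultimately have "0 \<le> trace (X ** U')" using insert.IH by simp
    moreover have "0 \<le> w \<bullet> (X *v w)" using X by (simp add: psd_mat_def)
    ultimately show ?thesis
      using trace_mult_rank_one_update[of X U w "U $ k $ k"] pos by (simp add: U'_def)
  qed
qed

lemma trace_mult_psd_nonneg:
  fixes X U :: "real^'n^'n"
  assumes "psd_mat X" and "psd_mat U"
  shows "0 \<le> trace (X ** U)"
  using trace_mult_psd_nonneg_supported[OF assms(1) finite[of UNIV] assms(2)] by simp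

lemma trace_mult_symmetric_eq_inner:
  fixes T U :: "real^'n^'n"
  assumes "transpose U = U"
  shows "trace (T ** U) = T \<bullet> U"
proof -
  have "U $ j $ i = U $ i $ j" for i j using assms by (metis transpose_def vec_lambda_beta)
  then show ?thesis by (simp add: trace_matrix_mult_eq_sum inner_vec_def)
qed

lemma trace_mult_le_norm:
  fixes T U :: "real^'n^'n"
  assumes "transpose U = U"
  shows "trace (T ** U) \<le> norm T * norm U"
  using norm_cauchy_schwarz[of T U] by (simp add: trace_mult_symmetric_eq_inner[OF assms])

lemma sqrt_trace_mult_self_eq_norm:
  fixes X :: "real^'n^'n"
  assumes "transpose X = X"
  shows "sqrt (trace (X ** X)) = norm X"
  by (simp add: trace_mult_symmetric_eq_inner[OF assms] norm_eq_sqrt_inner)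

lemma etr_uminus_mult_commute: "etr (- ((A::real^'n^'n) ** B)) = etr (- (B ** A))"
  unfolding etr_def trace_uminus trace_mul_sym[of A B] ..

lemma borel_measurable_vec_nth [measurable]:
  fixes f :: "'a \<Rightarrow> 'b::topological_space^'n"
  shows "f \<in> borel_measurable M \<Longrightarrow> (\<lambda>x. f x $ i) \<in> borel_measurable M"
  by (rule borel_measurable_continuous_on[where f="\<lambda>v. v $ i"])
     (auto intro: continuous_on_component continuous_on_id)

lemma borel_measurable_trace_mult [measurable]:
  fixes f g :: "'a \<Rightarrow> real^'n^'n"
  assumes [measurable]: "f \<in> borel_measurable M" "g \<in> borel_measurable M"
  shows "(\<lambda>x. trace (f x ** g x)) \<in> borel_measurable M"
  unfolding trace_matrix_mult_eq_sum by measurable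

lemma closed_psd_mat: "closed {X::real^'n^'n. psd_mat X}"
proof -
  have "{X::real^'n^'n. psd_mat X} =
      {X. (\<forall>i j. X $ i $ j = X $ j $ i) \<and> (\<forall>x. 0 \<le> (\<Sum>i\<in>UNIV. \<Sum>j\<in>UNIV. x $ i * X $ i $ j * x $ j))}"
    unfolding psd_mat_def inner_matrix_vector_eq_sum by (auto simp: vec_eq_iff transpose_def)
  also have "closed \<dots>"
    by (intro closed_Collect_conj closed_Collect_all closed_Collect_eq closed_Collect_le continuous_intros)
  finally show ?thesis .
qed

lemma pd_mat_sets: "{X::real^'n^'n. pd_mat X} \<in> sets borel"
proof -
  have "(\<lambda>X::real^'n^'n. det X) \<in> borel_measurable borel"
    unfolding det_def by measurable
  then have "(\<lambda>X::real^'n^'n. det X) -` (- {0}) \<inter> space borel \<in> sets borel"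
    by (rule measurable_sets) (simp add: open_Compl)
  moreover have "{X::real^'n^'n. pd_mat X} = {X. psd_mat X} \<inter> ((\<lambda>X. det X) -` (- {0}) \<inter> space borel)"
    by (auto simp: pd_mat_iff_psd_mat_det)
  ultimately show ?thesis using borel_closed[OF closed_psd_mat] by (metis sets.Int)
qed

lemma pred_pd_mat [measurable]: "Measurable.pred borel pd_mat"
  using pd_mat_sets by (simp add: pred_def)

definition bern_kernel :: "real^'n^'n \<Rightarrow> real^'n^'n \<Rightarrow> real" where
  "bern_kernel T X = 1 - etr (- (T ** X))"

lemma bern_kernel_eq_exp: "bern_kernel T X = 1 - exp (- trace (T ** X))"
  by (simp add: bern_kernel_def etr_def trace_uminus)

lemma borel_measurable_bern_kernel [measurable]:
  fixes f g :: "'a \<Rightarrow> real^'n^'n"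
  assumes [measurable]: "f \<in> borel_measurable M" "g \<in> borel_measurable M"
  shows "(\<lambda>x. bern_kernel (f x) (g x)) \<in> borel_measurable M"
  unfolding bern_kernel_eq_exp by measurable

lemma
  fixes T X :: "real^'n^'n"
  assumes "psd_mat T" and "psd_mat X"
  shows bern_kernel_nonneg: "0 \<le> bern_kernel T X"
    and bern_kernel_le_1: "bern_kernel T X \<le> 1"
    and bern_kernel_le_trace: "bern_kernel T X \<le> trace (T ** X)"
  using trace_mult_psd_nonneg[OF assms] exp_ge_add_one_self[of "- trace (T ** X)"]
  by (simp_all add: bern_kernel_eq_exp)

lemma abs_bern_kernel_le_1: "psd_mat T \<Longrightarrow> psd_mat X \<Longrightarrow> \<bar>bern_kernel T X\<bar> \<le> 1"
  using bern_kernel_nonneg bern_kernel_le_1 by (metis abs_of_nonneg)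

lemma bern_kernel_le_norm:
  fixes T X :: "real^'n^'n"
  assumes "psd_mat T" and "psd_mat X"
  shows "bern_kernel T X \<le> max 1 (norm T) * min 1 (norm X)"
proof (cases "norm X \<le> 1")
  case True
  have "bern_kernel T X \<le> norm T * norm X"
    using bern_kernel_le_trace[OF assms] trace_mult_le_norm[of X T] assms(2)
    by (simp add: psd_mat_def)
  also have "\<dots> \<le> max 1 (norm T) * norm X" by (simp add: mult_right_mono)
  finally show ?thesis using True by simp
next
  case False
  then show ?thesis using bern_kernel_le_1[OF assms] by simp
qed

section \<open>Matrix-variate Bernstein functions\<close>

lemma sigma_finite_measure_if_nn_integral_finite:
  fixes h :: "'a \<Rightarrow> real"
  assumes [measurable]: "h \<in> borel_measurable M"
    and pos: "\<And>x. x \<in> space M \<Longrightarrow> 0 < h x" and fin: "(\<integral>\<^sup>+x. ennreal (h x) \<partial>M) < \<infinity>"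
  shows "sigma_finite_measure M"
proof
  define B where "B n = {x \<in> space M. 1 \<le> real (Suc n) * h x}" for n
  have B_sets: "B n \<in> sets M" for n
    unfolding B_def by measurable
  have "emeasure M (B n) \<le> (\<integral>\<^sup>+x. ennreal (real (Suc n)) * ennreal (h x) \<partial>M)" for n
  proof -
    have "emeasure M (B n) = (\<integral>\<^sup>+x. indicator (B n) x \<partial>M)"
      using B_sets by simp
    also have "\<dots> \<le> (\<integral>\<^sup>+x. ennreal (real (Suc n)) * ennreal (h x) \<partial>M)"
      using pos by (intro nn_integral_mono)
        (auto simp: B_def indicator_def ennreal_mult'[symmetric] less_imp_le ennreal_leI simp del: of_nat_Suc)
    finally show ?thesis .
  qed
  also have "(\<integral>\<^sup>+x. ennreal (real (Suc n)) * ennreal (h x) \<partial>M) < \<infinity>" for n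
    using fin by (simp add: nn_integral_cmult ennreal_mult_less_top)
  finally have B_finite: "emeasure M (B n) \<noteq> \<infinity>" for n
    by (simp add: less_top)
  have "x \<in> (\<Union>n. B n)" if x: "x \<in> space M" for x
  proof -
    obtain n where "inverse (real (Suc n)) < h x"
      using reals_Archimedean[OF pos[OF x]] by blast
    then have "x \<in> B n" using x by (simp add: B_def field_simps)
    then show ?thesis by blast
  qed
  then have "(\<Union>n. B n) = space M" by (auto simp: B_def)
  then show "\<exists>A. countable A \<and> A \<subseteq> sets M \<and> \<Union> A = space M \<and> (\<forall>a\<in>A. emeasure M a \<noteq> \<infinity>)"
    using B_sets B_finite by (intro exI[of _ "range B"]) auto
qed

lemma mv_bernstein_sets: "mv_bernstein g A B \<mu> \<Longrightarrow> sets \<mu> = sets borel"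
  by (simp add: mv_bernstein_def)

lemma mv_bernstein_measurable_eq: "mv_bernstein g A B \<mu> \<Longrightarrow> measurable \<mu> N = measurable borel N"
  by (rule measurable_cong_sets[OF mv_bernstein_sets refl])

lemma mv_bernstein_AE_pd_mat:
  assumes "mv_bernstein g A B \<mu>"
  shows "AE X in \<mu>. pd_mat X"
proof (rule AE_I')
  have "{X. \<not> pd_mat X} \<in> sets borel"
    using borel_comp[OF pd_mat_sets] by (simp add: Compl_eq)
  then show "{X. \<not> pd_mat X} \<in> null_sets \<mu>"
    using assms by (simp add: mv_bernstein_def null_sets_def)
qed auto

lemma mv_bernstein_nn_integral_min_norm:
  assumes "mv_bernstein g A B \<mu>"
  shows "(\<integral>\<^sup>+X. ennreal (min 1 (norm X)) \<partial>\<mu>) < \<infinity>"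
proof -
  have "AE X in \<mu>. ennreal (min 1 (norm X)) = ennreal (min 1 (sqrt (trace (X ** X))))"
    using mv_bernstein_AE_pd_mat[OF assms]
    by eventually_elim (simp add: pd_mat_def sqrt_trace_mult_self_eq_norm)
  then have "(\<integral>\<^sup>+X. ennreal (min 1 (norm X)) \<partial>\<mu>) = (\<integral>\<^sup>+X. ennreal (min 1 (sqrt (trace (X ** X)))) \<partial>\<mu>)"
    by (rule nn_integral_cong_AE)
  then show ?thesis using assms by (simp add: mv_bernstein_def)
qed

lemma mv_bernstein_sigma_finite:
  assumes "mv_bernstein g A B \<mu>"
  shows "sigma_finite_measure \<mu>"
proof (rule sigma_finite_measure_if_nn_integral_finite)
  show "(\<lambda>X. if pd_mat X then min 1 (norm X) else 1) \<in> borel_measurable \<mu>"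
    unfolding mv_bernstein_measurable_eq[OF assms] by measurable
  show "0 < (if pd_mat X then min 1 (norm X) else 1)" for X
    using pd_mat_nonzero[of X] by simp
  have "AE X in \<mu>. ennreal (if pd_mat X then min 1 (norm X) else 1) = ennreal (min 1 (norm X))"
    using mv_bernstein_AE_pd_mat[OF assms] by eventually_elim simp
  then have "(\<integral>\<^sup>+X. ennreal (if pd_mat X then min 1 (norm X) else 1) \<partial>\<mu>) = (\<integral>\<^sup>+X. ennreal (min 1 (norm X)) \<partial>\<mu>)"
    by (rule nn_integral_cong_AE)
  then show "(\<integral>\<^sup>+X. ennreal (if pd_mat X then min 1 (norm X) else 1) \<partial>\<mu>) < \<infinity>"
    using mv_bernstein_nn_integral_min_norm[OF assms] by simp
qed

lemma mv_bernstein_integrable_bern_kernel: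
  fixes T :: "real^'n^'n"
  assumes B: "mv_bernstein g A B \<mu>" and T: "psd_mat T"
  shows "integrable \<mu> (bern_kernel T)"
proof (rule integrableI_bounded)
  show "bern_kernel T \<in> borel_measurable \<mu>"
    unfolding mv_bernstein_measurable_eq[OF B] by measurable
  have "(\<integral>\<^sup>+X. ennreal (norm (bern_kernel T X)) \<partial>\<mu>)
      \<le> (\<integral>\<^sup>+X. ennreal (max 1 (norm T)) * ennreal (min 1 (norm X)) \<partial>\<mu>)"
    using mv_bernstein_AE_pd_mat[OF B]
  proof (rule nn_integral_mono_AE[OF AE_mp], intro AE_I2 impI)
    fix X :: "real^'n^'n" assume "pd_mat X"
    then have "psd_mat X" by (rule pd_mat_imp_psd_mat)
    then show "ennreal (norm (bern_kernel T X)) \<le> ennreal (max 1 (norm T)) * ennreal (min 1 (norm X))"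
      using bern_kernel_nonneg[OF T] bern_kernel_le_norm[OF T]
      by (simp add: ennreal_mult'[symmetric] ennreal_leI)
  qed
  also have "\<dots> = ennreal (max 1 (norm T)) * (\<integral>\<^sup>+X. ennreal (min 1 (norm X)) \<partial>\<mu>)"
    by (intro nn_integral_cmult) (simp add: mv_bernstein_measurable_eq[OF B])
  also have "\<dots> < \<infinity>"
    using mv_bernstein_nn_integral_min_norm[OF B] by (simp add: ennreal_mult_less_top)
  finally show "(\<integral>\<^sup>+X. ennreal (norm (bern_kernel T X)) \<partial>\<mu>) < \<infinity>" .
qed

lemma mv_bernstein_AE_bern_kernel_nonneg:
  assumes "mv_bernstein g A B \<mu>" and "psd_mat T"
  shows "AE X in \<mu>. 0 \<le> bern_kernel T X"
  using mv_bernstein_AE_pd_mat[OF assms(1)]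
  by (rule AE_mp) (simp add: bern_kernel_nonneg[OF assms(2)] pd_mat_imp_psd_mat)

lemma mv_bernstein_eq_integral:
  assumes "mv_bernstein g A B \<mu>" and "pd_mat T"
  shows "g T = trace A + trace (B ** T) + (\<integral>X. bern_kernel T X \<partial>\<mu>)"
    and "0 \<le> trace A + trace (B ** T)" and "0 \<le> (\<integral>X. bern_kernel T X \<partial>\<mu>)"
proof -
  have psd: "psd_mat A" "psd_mat B" "psd_mat T"
    using assms by (simp_all add: mv_bernstein_def pd_mat_imp_psd_mat)
  show "g T = trace A + trace (B ** T) + (\<integral>X. bern_kernel T X \<partial>\<mu>)"
    using assms by (simp add: mv_bernstein_def bern_kernel_def)
  show "0 \<le> trace A + trace (B ** T)"
    using psd_mat_trace_nonneg[OF psd(1)] trace_mult_psd_nonneg[OF psd(2,3)] by simp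
  show "0 \<le> (\<integral>X. bern_kernel T X \<partial>\<mu>)"
    by (rule integral_nonneg_AE[OF mv_bernstein_AE_bern_kernel_nonneg[OF assms(1) psd(3)]])
qed

lemma mv_bernstein_nonneg: "mv_bernstein g A B \<mu> \<Longrightarrow> pd_mat T \<Longrightarrow> 0 \<le> g T"
  using mv_bernstein_eq_integral[of g A B \<mu> T] by simp

text \<open>The integral part of a Bernstein function, taken in \<open>ennreal\<close> so that Tonelli's theorem
  applies without integrability side conditions.\<close>
definition levy_integral :: "(real^'n^'n) measure \<Rightarrow> real^'n^'n \<Rightarrow> ennreal" where
  "levy_integral \<mu> T = (\<integral>\<^sup>+X. ennreal (bern_kernel T X) \<partial>\<mu>)"

lemma mv_bernstein_eq_levy_integral:
  assumes B: "mv_bernstein g A B \<mu>" and T: "pd_mat T"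
  shows "ennreal (g T) = ennreal (trace A + trace (B ** T)) + levy_integral \<mu> T"
proof -
  have "levy_integral \<mu> T = ennreal (\<integral>X. bern_kernel T X \<partial>\<mu>)"
    unfolding levy_integral_def using B T
    by (intro nn_integral_eq_integral mv_bernstein_integrable_bern_kernel
        mv_bernstein_AE_bern_kernel_nonneg) (simp_all add: pd_mat_imp_psd_mat)
  then show ?thesis using mv_bernstein_eq_integral[OF B T] by simp
qed

lemma borel_measurable_levy_integral:
  assumes "sigma_finite_measure \<mu>" and "sets \<mu> = sets borel"
  shows "levy_integral \<mu> \<in> borel_measurable borel"
proof -
  interpret sigma_finite_measure \<mu> by fact
  show ?thesis
    unfolding levy_integral_def
    by (rule borel_measurable_nn_integral)
       (simp add: measurable_cong_sets[OF sets_pair_measure_cong[OF refl assms(2)] refl])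
qed

section \<open>Laplace transform order and independence\<close>

lemma indep_rv_compose:
  assumes indep: "indep_rv M S1 X1 S2 X2"
    and X1: "X1 \<in> measurable M S1" and X2: "X2 \<in> measurable M S2"
    and [measurable]: "\<phi> \<in> measurable S1 T1" "\<psi> \<in> measurable S2 T2"
  shows "indep_rv M T1 (\<lambda>x. \<phi> (X1 x)) T2 (\<lambda>x. \<psi> (X2 x))"
  unfolding indep_rv_def
proof (intro ballI)
  fix A B assume "A \<in> sets T1" "B \<in> sets T2"
  then have sets: "\<phi> -` A \<inter> space S1 \<in> sets S1" "\<psi> -` B \<inter> space S2 \<in> sets S2"
    by measurable
  have eqs: "(\<lambda>x. \<phi> (X1 x)) -` A \<inter> space M = X1 -` (\<phi> -` A \<inter> space S1) \<inter> space M"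
    "(\<lambda>x. \<psi> (X2 x)) -` B \<inter> space M = X2 -` (\<psi> -` B \<inter> space S2) \<inter> space M"
    "(\<lambda>x. \<phi> (X1 x)) -` A \<inter> (\<lambda>x. \<psi> (X2 x)) -` B \<inter> space M
      = X1 -` (\<phi> -` A \<inter> space S1) \<inter> X2 -` (\<psi> -` B \<inter> space S2) \<inter> space M"
    using measurable_space[OF X1] measurable_space[OF X2] by auto
  show "measure M ((\<lambda>x. \<phi> (X1 x)) -` A \<inter> (\<lambda>x. \<psi> (X2 x)) -` B \<inter> space M)
      = measure M ((\<lambda>x. \<phi> (X1 x)) -` A \<inter> space M) * measure M ((\<lambda>x. \<psi> (X2 x)) -` B \<inter> space M)"
    using indep sets unfolding indep_rv_def eqs by blast
qed

lemma (in prob_space) indep_var_if_indep_rv: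
  assumes X: "random_variable S X" and Y: "random_variable T Y" and indep: "indep_rv M S X T Y"
  shows "indep_var S X T Y"
proof -
  have Int_stable: "Int_stable {Z -` A \<inter> space M |A. A \<in> sets R}" for Z :: "'a \<Rightarrow> 'b" and R
  proof (safe intro!: Int_stableI)
    fix A B assume "A \<in> sets R" "B \<in> sets R"
    then show "\<exists>C. (Z -` A \<inter> space M) \<inter> (Z -` B \<inter> space M) = Z -` C \<inter> space M \<and> C \<in> sets R"
      by (intro exI[of _ "A \<inter> B"]) auto
  qed
  have "indep_set {X -` A \<inter> space M |A. A \<in> sets S} {Y -` B \<inter> space M |B. B \<in> sets T}"
  proof (rule indep_setI)
    show "{X -` A \<inter> space M |A. A \<in> sets S} \<subseteq> events" "{Y -` B \<inter> space M |B. B \<in> sets T} \<subseteq> events"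
      using measurable_sets[OF X] measurable_sets[OF Y] by auto
  next
    fix a b assume "a \<in> {X -` A \<inter> space M |A. A \<in> sets S}" "b \<in> {Y -` B \<inter> space M |B. B \<in> sets T}"
    then obtain A B where AB: "A \<in> sets S" "B \<in> sets T"
      and ab: "a = X -` A \<inter> space M" "b = Y -` B \<inter> space M" by blast
    have "a \<inter> b = X -` A \<inter> Y -` B \<inter> space M" using ab by blast
    then show "prob (a \<inter> b) = prob a * prob b"
      using indep AB unfolding indep_rv_def ab by simp
  qed
  then show ?thesis
    unfolding indep_var_eq using X Y by (intro conjI indep_set_sigma_sets Int_stable) auto
qed

lemma (in prob_space) indep_rv_integral_mult:
  fixes \<phi> :: "'c \<Rightarrow> real" and \<psi> :: "'d \<Rightarrow> real"
  assumes "indep_rv M S1 X1 S2 X2"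
    and X1: "X1 \<in> measurable M S1" and X2: "X2 \<in> measurable M S2"
    and \<phi>: "\<phi> \<in> borel_measurable S1" and \<psi>: "\<psi> \<in> borel_measurable S2"
    and "integrable M (\<lambda>x. \<phi> (X1 x))" "integrable M (\<lambda>x. \<psi> (X2 x))"
  shows "(\<integral>x. \<phi> (X1 x) * \<psi> (X2 x) \<partial>M) = (\<integral>x. \<phi> (X1 x) \<partial>M) * (\<integral>x. \<psi> (X2 x) \<partial>M)"
proof -
  have "indep_var borel (\<lambda>x. \<phi> (X1 x)) borel (\<lambda>x. \<psi> (X2 x))"
  proof (rule indep_var_if_indep_rv)
    show "random_variable borel (\<lambda>x. \<phi> (X1 x))" "random_variable borel (\<lambda>x. \<psi> (X2 x))"
      using measurable_compose[OF X1 \<phi>] measurable_compose[OF X2 \<psi>] by simp_all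
    show "indep_rv M borel (\<lambda>x. \<phi> (X1 x)) borel (\<lambda>x. \<psi> (X2 x))"
      by (rule indep_rv_compose) fact+
  qed
  then show ?thesis using assms(6,7) by (rule indep_var_lebesgue_integral)
qed

lemma integral_distr_eq:
  fixes h :: "'c \<Rightarrow> real"
  assumes eq: "distr M S X = distr N S Y"
    and "X \<in> measurable M S" "Y \<in> measurable N S" "h \<in> borel_measurable S"
  shows "(\<integral>x. h (X x) \<partial>M) = (\<integral>y. h (Y y) \<partial>N)"
proof -
  have "(\<integral>x. h (X x) \<partial>M) = integral\<^sup>L (distr M S X) h"
    by (rule integral_distr[symmetric]) fact+
  also have "\<dots> = (\<integral>y. h (Y y) \<partial>N)"
    unfolding eq by (rule integral_distr) fact+
  finally show ?thesis .
qed

lemma nn_integral_distr_eq: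
  assumes eq: "distr M S X = distr N S Y"
    and "X \<in> measurable M S" "Y \<in> measurable N S" "h \<in> borel_measurable S"
  shows "(\<integral>\<^sup>+x. h (X x) \<partial>M) = (\<integral>\<^sup>+y. h (Y y) \<partial>N)"
proof -
  have "(\<integral>\<^sup>+x. h (X x) \<partial>M) = integral\<^sup>N (distr M S X) h"
    using assms by (intro nn_integral_distr[symmetric]) simp_all
  also have "\<dots> = (\<integral>\<^sup>+y. h (Y y) \<partial>N)"
    unfolding eq using assms by (intro nn_integral_distr) simp_all
  finally show ?thesis .
qed

lemma (in prob_space) integral_one_minus_mult:
  fixes f g :: "'a \<Rightarrow> real"
  assumes "integrable M f" "integrable M g" "integrable M (\<lambda>x. f x * g x)"
  shows "(\<integral>x. (1 - f x) * (1 - g x) \<partial>M) = 1 - integral\<^sup>L M f - integral\<^sup>L M g + (\<integral>x. f x * g x \<partial>M)"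
proof -
  have "(\<integral>x. (1 - f x) * (1 - g x) \<partial>M) = (\<integral>x. 1 - f x - g x + f x * g x \<partial>M)"
    by (simp add: algebra_simps)
  then show ?thesis using assms by (simp add: prob_space)
qed

lemma (in prob_space) integrable_bern_kernel:
  assumes "X \<in> borel_measurable M" "\<forall>x\<in>space M. psd_mat (X x)" "psd_mat U"
  shows "integrable M (\<lambda>x. bern_kernel (X x) U)"
  using assms by (intro integrable_const_bound[where B=1] AE_I2) (auto simp: abs_bern_kernel_le_1)

lemma (in prob_space) integrable_bern_kernel_mult:
  assumes "X1 \<in> borel_measurable M" "X2 \<in> borel_measurable M"
    and "\<forall>x\<in>space M. psd_mat (X1 x) \<and> psd_mat (X2 x)" "psd_mat U" "psd_mat V"
  shows "integrable M (\<lambda>x. bern_kernel (X1 x) U * bern_kernel (X2 x) V)"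
  using assms
  by (intro integrable_const_bound[where B=1] AE_I2) (auto simp: abs_mult abs_bern_kernel_le_1 intro!: mult_le_one)

text \<open>In \<open>(1 - a)(1 - b) = 1 - a - b + ab\<close> the linear terms only see the marginals, and the
  product term is where the Laplace transform order and independence enter.\<close>
lemma lt_order_bern_kernel_product_ge:
  fixes X1 :: "'a \<Rightarrow> real^'p^'p" and X2 :: "'a \<Rightarrow> real^'q^'q"
    and Y1 :: "'b \<Rightarrow> real^'p^'p" and Y2 :: "'b \<Rightarrow> real^'q^'q"
  assumes "prob_space M" and "prob_space N"
    and [measurable]: "X1 \<in> borel_measurable M" "X2 \<in> borel_measurable M"
      "Y1 \<in> borel_measurable N" "Y2 \<in> borel_measurable N"
    and psd_X: "\<forall>x\<in>space M. psd_mat (X1 x) \<and> psd_mat (X2 x)"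
    and psd_Y: "\<forall>y\<in>space N. psd_mat (Y1 y) \<and> psd_mat (Y2 y)"
    and distr1: "distr M borel X1 = distr N borel Y1" and distr2: "distr M borel X2 = distr N borel Y2"
    and indep: "indep_rv N borel Y1 borel Y2"
    and lt: "lt_order M X1 X2 N Y1 Y2"
    and U: "psd_mat U" and V: "psd_mat V"
  shows "(\<integral>y. bern_kernel (Y1 y) U \<partial>N) * (\<integral>y. bern_kernel (Y2 y) V \<partial>N)
    \<le> (\<integral>x. bern_kernel (X1 x) U * bern_kernel (X2 x) V \<partial>M)"
proof -
  interpret M: prob_space M by fact
  interpret N: prob_space N by fact
  define k1 k2 where "k1 T = bern_kernel T U" and "k2 S = bern_kernel S V"
    for T :: "real^'p^'p" and S :: "real^'q^'q"
  have [measurable]: "k1 \<in> borel_measurable borel" "k2 \<in> borel_measurable borel"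
    unfolding k1_def k2_def by measurable
  have etr_eq: "etr (- (U ** T)) = 1 - k1 T" "etr (- (V ** S)) = 1 - k2 S" for T S
    by (simp_all add: k1_def k2_def bern_kernel_def etr_uminus_mult_commute[of U] etr_uminus_mult_commute[of V])
  have int_M: "integrable M (\<lambda>x. k1 (X1 x))" "integrable M (\<lambda>x. k2 (X2 x))"
      "integrable M (\<lambda>x. k1 (X1 x) * k2 (X2 x))"
    using psd_X U V unfolding k1_def k2_def
    by (auto intro: M.integrable_bern_kernel M.integrable_bern_kernel_mult)
  have int_N: "integrable N (\<lambda>y. k1 (Y1 y))" "integrable N (\<lambda>y. k2 (Y2 y))"
      "integrable N (\<lambda>y. k1 (Y1 y) * k2 (Y2 y))"
    using psd_Y U V unfolding k1_def k2_def
    by (auto intro: N.integrable_bern_kernel N.integrable_bern_kernel_mult)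
  have marginal: "(\<integral>x. k1 (X1 x) \<partial>M) = (\<integral>y. k1 (Y1 y) \<partial>N)" "(\<integral>x. k2 (X2 x) \<partial>M) = (\<integral>y. k2 (Y2 y) \<partial>N)"
    by (rule integral_distr_eq[OF distr1], measurable) (rule integral_distr_eq[OF distr2], measurable)
  have "(\<integral>y. (1 - k1 (Y1 y)) * (1 - k2 (Y2 y)) \<partial>N) = (\<integral>y. 1 - k1 (Y1 y) \<partial>N) * (\<integral>y. 1 - k2 (Y2 y) \<partial>N)"
    using int_N by (intro N.indep_rv_integral_mult[OF indep, where \<phi>="\<lambda>T. 1 - k1 T" and \<psi>="\<lambda>S. 1 - k2 S"]) auto
  also have "\<dots> = (1 - (\<integral>y. k1 (Y1 y) \<partial>N)) * (1 - (\<integral>y. k2 (Y2 y) \<partial>N))"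
    using int_N by (simp add: N.prob_space)
  finally have product: "(\<integral>y. (1 - k1 (Y1 y)) * (1 - k2 (Y2 y)) \<partial>N)
      = (1 - (\<integral>y. k1 (Y1 y) \<partial>N)) * (1 - (\<integral>y. k2 (Y2 y) \<partial>N))" .
  have "(\<integral>y. etr (- (U ** Y1 y)) * etr (- (V ** Y2 y)) \<partial>N) \<le> (\<integral>x. etr (- (U ** X1 x)) * etr (- (V ** X2 x)) \<partial>M)"
    using lt U V unfolding lt_order_def by blast
  then have "(\<integral>y. (1 - k1 (Y1 y)) * (1 - k2 (Y2 y)) \<partial>N) \<le> (\<integral>x. (1 - k1 (X1 x)) * (1 - k2 (X2 x)) \<partial>M)"
    unfolding etr_eq .
  then show ?thesis
    using product marginal M.integral_one_minus_mult[OF int_M] N.integral_one_minus_mult[OF int_N]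
    by (simp add: k1_def k2_def algebra_simps)
qed

section \<open>Mixing over the Levy measures\<close>

lemma nn_integral_mixture_product_ge:
  fixes \<phi> :: "'a \<Rightarrow> 'c \<Rightarrow> ennreal" and \<psi> :: "'a \<Rightarrow> 'd \<Rightarrow> ennreal"
    and \<phi>' :: "'b \<Rightarrow> 'c \<Rightarrow> ennreal" and \<psi>' :: "'b \<Rightarrow> 'd \<Rightarrow> ennreal"
  assumes "sigma_finite_measure M" "sigma_finite_measure N"
    and "sigma_finite_measure \<mu>" "sigma_finite_measure \<nu>"
    and [measurable]: "case_prod \<phi> \<in> borel_measurable (M \<Otimes>\<^sub>M \<mu>)" "case_prod \<psi> \<in> borel_measurable (M \<Otimes>\<^sub>M \<nu>)"
      "case_prod \<phi>' \<in> borel_measurable (N \<Otimes>\<^sub>M \<mu>)" "case_prod \<psi>' \<in> borel_measurable (N \<Otimes>\<^sub>M \<nu>)"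
    and ge: "AE u in \<mu>. AE v in \<nu>. (\<integral>\<^sup>+y. \<phi>' y u \<partial>N) * (\<integral>\<^sup>+y. \<psi>' y v \<partial>N) \<le> (\<integral>\<^sup>+x. \<phi> x u * \<psi> x v \<partial>M)"
  shows "(\<integral>\<^sup>+y. (\<integral>\<^sup>+u. \<phi>' y u \<partial>\<mu>) \<partial>N) * (\<integral>\<^sup>+y. (\<integral>\<^sup>+v. \<psi>' y v \<partial>\<nu>) \<partial>N)
    \<le> (\<integral>\<^sup>+x. (\<integral>\<^sup>+u. \<phi> x u \<partial>\<mu>) * (\<integral>\<^sup>+v. \<psi> x v \<partial>\<nu>) \<partial>M)"
proof -
  interpret M\<mu>: pair_sigma_finite M \<mu> using assms by (simp add: pair_sigma_finite_def)
  interpret M\<nu>: pair_sigma_finite M \<nu> using assms by (simp add: pair_sigma_finite_def)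
  interpret N\<mu>: pair_sigma_finite N \<mu> using assms by (simp add: pair_sigma_finite_def)
  interpret N\<nu>: pair_sigma_finite N \<nu> using assms by (simp add: pair_sigma_finite_def)
  define P where "P u = (\<integral>\<^sup>+y. \<phi>' y u \<partial>N)" for u
  define Q where "Q v = (\<integral>\<^sup>+y. \<psi>' y v \<partial>N)" for v
  have [measurable]: "P \<in> borel_measurable \<mu>" "Q \<in> borel_measurable \<nu>"
    unfolding P_def Q_def by measurable
  have "(\<integral>\<^sup>+y. (\<integral>\<^sup>+u. \<phi>' y u \<partial>\<mu>) \<partial>N) * (\<integral>\<^sup>+y. (\<integral>\<^sup>+v. \<psi>' y v \<partial>\<nu>) \<partial>N)
      = (\<integral>\<^sup>+u. P u \<partial>\<mu>) * (\<integral>\<^sup>+v. Q v \<partial>\<nu>)"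
    unfolding P_def Q_def by (simp add: N\<mu>.Fubini' N\<nu>.Fubini')
  also have "\<dots> = (\<integral>\<^sup>+u. \<integral>\<^sup>+v. P u * Q v \<partial>\<nu> \<partial>\<mu>)"
    by (simp add: nn_integral_cmult nn_integral_multc)
  also have "\<dots> \<le> (\<integral>\<^sup>+u. \<integral>\<^sup>+v. \<integral>\<^sup>+x. \<phi> x u * \<psi> x v \<partial>M \<partial>\<nu> \<partial>\<mu>)"
    using ge unfolding P_def Q_def
    by (intro nn_integral_mono_AE) (auto elim!: AE_mp intro!: nn_integral_mono_AE)
  also have "\<dots> = (\<integral>\<^sup>+u. \<integral>\<^sup>+x. \<integral>\<^sup>+v. \<phi> x u * \<psi> x v \<partial>\<nu> \<partial>M \<partial>\<mu>)"
    by (intro nn_integral_cong M\<nu>.Fubini') measurable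
  also have "\<dots> = (\<integral>\<^sup>+x. \<integral>\<^sup>+u. \<integral>\<^sup>+v. \<phi> x u * \<psi> x v \<partial>\<nu> \<partial>\<mu> \<partial>M)"
    by (rule M\<mu>.Fubini') measurable
  also have "\<dots> = (\<integral>\<^sup>+x. (\<integral>\<^sup>+u. \<phi> x u \<partial>\<mu>) * (\<integral>\<^sup>+v. \<psi> x v \<partial>\<nu>) \<partial>M)"
    by (intro nn_integral_cong) (simp add: nn_integral_cmult nn_integral_multc)
  finally show ?thesis .
qed

lemma (in prob_space) nn_integral_bern_kernel:
  assumes "X \<in> borel_measurable M" "\<forall>x\<in>space M. psd_mat (X x)" "psd_mat U"
  shows "(\<integral>\<^sup>+x. ennreal (bern_kernel (X x) U) \<partial>M) = ennreal (\<integral>x. bern_kernel (X x) U \<partial>M)"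
  using assms by (intro nn_integral_eq_integral integrable_bern_kernel AE_I2) (auto simp: bern_kernel_nonneg)

lemma (in prob_space) nn_integral_bern_kernel_mult:
  assumes "X1 \<in> borel_measurable M" "X2 \<in> borel_measurable M"
    and "\<forall>x\<in>space M. psd_mat (X1 x) \<and> psd_mat (X2 x)" "psd_mat U" "psd_mat V"
  shows "(\<integral>\<^sup>+x. ennreal (bern_kernel (X1 x) U) * ennreal (bern_kernel (X2 x) V) \<partial>M)
    = ennreal (\<integral>x. bern_kernel (X1 x) U * bern_kernel (X2 x) V \<partial>M)"
proof -
  have "(\<integral>\<^sup>+x. ennreal (bern_kernel (X1 x) U) * ennreal (bern_kernel (X2 x) V) \<partial>M)
      = (\<integral>\<^sup>+x. ennreal (bern_kernel (X1 x) U * bern_kernel (X2 x) V) \<partial>M)"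
    using assms by (intro nn_integral_cong) (simp add: ennreal_mult bern_kernel_nonneg)
  also have "\<dots> = ennreal (\<integral>x. bern_kernel (X1 x) U * bern_kernel (X2 x) V \<partial>M)"
    using assms by (intro nn_integral_eq_integral integrable_bern_kernel_mult AE_I2)
      (auto simp: bern_kernel_nonneg)
  finally show ?thesis .
qed

lemma levy_integral_product_ge:
  fixes X1 :: "'a \<Rightarrow> real^'p^'p" and X2 :: "'a \<Rightarrow> real^'q^'q"
    and Y1 :: "'b \<Rightarrow> real^'p^'p" and Y2 :: "'b \<Rightarrow> real^'q^'q"
  assumes M: "prob_space M" and N: "prob_space N"
    and [measurable]: "X1 \<in> borel_measurable M" "X2 \<in> borel_measurable M"
      "Y1 \<in> borel_measurable N" "Y2 \<in> borel_measurable N"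
    and psd_X: "\<forall>x\<in>space M. psd_mat (X1 x) \<and> psd_mat (X2 x)"
    and psd_Y: "\<forall>y\<in>space N. psd_mat (Y1 y) \<and> psd_mat (Y2 y)"
    and "distr M borel X1 = distr N borel Y1" "distr M borel X2 = distr N borel Y2"
    and "indep_rv N borel Y1 borel Y2"
    and "lt_order M X1 X2 N Y1 Y2"
    and \<mu>: "sigma_finite_measure \<mu>" "sets \<mu> = sets borel" "AE U in \<mu>. psd_mat U"
    and \<nu>: "sigma_finite_measure \<nu>" "sets \<nu> = sets borel" "AE V in \<nu>. psd_mat V"
  shows "(\<integral>\<^sup>+y. levy_integral \<mu> (Y1 y) \<partial>N) * (\<integral>\<^sup>+y. levy_integral \<nu> (Y2 y) \<partial>N)
    \<le> (\<integral>\<^sup>+x. levy_integral \<mu> (X1 x) * levy_integral \<nu> (X2 x) \<partial>M)"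
  unfolding levy_integral_def
proof (rule nn_integral_mixture_product_ge)
  show "sigma_finite_measure M" "sigma_finite_measure N"
    using M N by (simp_all add: prob_space_imp_sigma_finite)
  show "sigma_finite_measure \<mu>" "sigma_finite_measure \<nu>" by fact+
  have pair_eq: "measurable (L \<Otimes>\<^sub>M \<mu>) borel = measurable (L \<Otimes>\<^sub>M borel) borel"
    "measurable (L \<Otimes>\<^sub>M \<nu>) borel = measurable (L \<Otimes>\<^sub>M borel) borel" for L :: "'e measure"
    by (rule measurable_cong_sets[OF sets_pair_measure_cong[OF refl] refl], fact)+
  show "(\<lambda>(x, U). ennreal (bern_kernel (X1 x) U)) \<in> borel_measurable (M \<Otimes>\<^sub>M \<mu>)"
    "(\<lambda>(x, V). ennreal (bern_kernel (X2 x) V)) \<in> borel_measurable (M \<Otimes>\<^sub>M \<nu>)"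
    "(\<lambda>(y, U). ennreal (bern_kernel (Y1 y) U)) \<in> borel_measurable (N \<Otimes>\<^sub>M \<mu>)"
    "(\<lambda>(y, V). ennreal (bern_kernel (Y2 y) V)) \<in> borel_measurable (N \<Otimes>\<^sub>M \<nu>)"
    unfolding pair_eq by measurable
  interpret M: prob_space M by fact
  interpret N: prob_space N by fact
  show "AE U in \<mu>. AE V in \<nu>. (\<integral>\<^sup>+y. ennreal (bern_kernel (Y1 y) U) \<partial>N) * (\<integral>\<^sup>+y. ennreal (bern_kernel (Y2 y) V) \<partial>N)
      \<le> (\<integral>\<^sup>+x. ennreal (bern_kernel (X1 x) U) * ennreal (bern_kernel (X2 x) V) \<partial>M)"
    using \<mu>(3)
  proof eventually_elim
    case (elim U)
    show ?case
      using \<nu>(3)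
    proof eventually_elim
      case (elim V)
      have "0 \<le> (\<integral>y. bern_kernel (Y1 y) U \<partial>N)"
        using psd_Y \<open>psd_mat U\<close> by (auto intro!: integral_nonneg_AE AE_I2 bern_kernel_nonneg)
      with lt_order_bern_kernel_product_ge[OF assms(1-12) \<open>psd_mat U\<close> \<open>psd_mat V\<close>]
      show ?case
        using psd_X psd_Y \<open>psd_mat U\<close> \<open>psd_mat V\<close>
        by (simp add: N.nn_integral_bern_kernel M.nn_integral_bern_kernel_mult ennreal_mult'[symmetric] ennreal_leI)
    qed
  qed
qed

lemma (in prob_space) nn_integral_const_add:
  "f \<in> borel_measurable M \<Longrightarrow> (\<integral>\<^sup>+x. c + f x \<partial>M) = c + integral\<^sup>N M f"
  by (simp add: nn_integral_add emeasure_space_1)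

lemma nn_integral_shifted_product_ge:
  assumes "prob_space M" "prob_space N"
    and [measurable]: "F \<in> borel_measurable M" "G \<in> borel_measurable M"
      "F' \<in> borel_measurable N" "G' \<in> borel_measurable N"
    and F: "integral\<^sup>N M F = integral\<^sup>N N F'" and G: "integral\<^sup>N M G = integral\<^sup>N N G'"
    and FG: "integral\<^sup>N N F' * integral\<^sup>N N G' \<le> (\<integral>\<^sup>+x. F x * G x \<partial>M)"
  shows "(\<integral>\<^sup>+y. a + F' y \<partial>N) * (\<integral>\<^sup>+y. b + G' y \<partial>N) \<le> (\<integral>\<^sup>+x. (a + F x) * (b + G x) \<partial>M)"
proof -
  interpret M: prob_space M by fact
  interpret N: prob_space N by fact
  have "(\<integral>\<^sup>+y. a + F' y \<partial>N) * (\<integral>\<^sup>+y. b + G' y \<partial>N)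
      = a * b + (a * integral\<^sup>N M G + b * integral\<^sup>N M F + integral\<^sup>N N F' * integral\<^sup>N N G')"
    by (simp add: N.nn_integral_const_add F G algebra_simps)
  also have "\<dots> \<le> a * b + (a * integral\<^sup>N M G + b * integral\<^sup>N M F + (\<integral>\<^sup>+x. F x * G x \<partial>M))"
    using FG by (intro add_left_mono)
  also have "\<dots> = a * b + (\<integral>\<^sup>+x. a * G x + b * F x + F x * G x \<partial>M)"
    by (simp add: nn_integral_add nn_integral_cmult)
  also have "\<dots> = (\<integral>\<^sup>+x. (a + F x) * (b + G x) \<partial>M)"
    by (simp add: M.nn_integral_const_add[symmetric] algebra_simps)
  finally show ?thesis .
qed

lemma integral_mult_le_if_nn_integral_mult_le:
  fixes h :: "'a \<Rightarrow> real" and h1 h2 :: "'b \<Rightarrow> real"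
  assumes "integrable M h" "integrable N h1" "integrable N h2"
    and "AE x in M. 0 \<le> h x" "AE y in N. 0 \<le> h1 y" "AE y in N. 0 \<le> h2 y"
    and le: "(\<integral>\<^sup>+y. ennreal (h1 y) \<partial>N) * (\<integral>\<^sup>+y. ennreal (h2 y) \<partial>N) \<le> (\<integral>\<^sup>+x. ennreal (h x) \<partial>M)"
  shows "(\<integral>y. h1 y \<partial>N) * (\<integral>y. h2 y \<partial>N) \<le> (\<integral>x. h x \<partial>M)"
proof -
  have "0 \<le> (\<integral>y. h1 y \<partial>N)" "0 \<le> (\<integral>x. h x \<partial>M)"
    using assms by (simp_all add: integral_nonneg_AE)
  then show ?thesis
    using le assms by (simp add: nn_integral_eq_integral ennreal_mult'[symmetric])
qed

theorem theorem3p12: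
  fixes M :: "'a measure" and N :: "'b measure"
    and X11 :: "'a \<Rightarrow> real^'p^'p" and X22 :: "'a \<Rightarrow> real^'q^'q"
    and Y11 :: "'b \<Rightarrow> real^'p^'p" and Y22 :: "'b \<Rightarrow> real^'q^'q"
    and f :: "real^'p^'p \<Rightarrow> real" and g :: "real^'q^'q \<Rightarrow> real"
    and A1 :: "real^'p^'p" and A2 :: "real^'q^'q"
    and \<mu>1 :: "(real^'p^'p) measure" and \<mu>2 :: "(real^'q^'q) measure"
  assumes "prob_space M" and "prob_space N"
    and "X11 \<in> borel_measurable M" and "X22 \<in> borel_measurable M"
    and "Y11 \<in> borel_measurable N" and "Y22 \<in> borel_measurable N"
    and "\<forall>x\<in>space M. pd_mat (X11 x) \<and> pd_mat (X22 x)"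
    and "\<forall>y\<in>space N. pd_mat (Y11 y) \<and> pd_mat (Y22 y)"
    and "distr M borel X11 = distr N borel Y11"
    and "distr M borel X22 = distr N borel Y22"
    and "indep_rv N borel Y11 borel Y22"
    and "lt_order M X11 X22 N Y11 Y22"
    and "mv_bernstein f A1 0 \<mu>1" and "mv_bernstein g A2 0 \<mu>2"
    and "integrable M (\<lambda>x. f (X11 x) * g (X22 x))"
    and "integrable N (\<lambda>y. f (Y11 y))" and "integrable N (\<lambda>y. g (Y22 y))"
  shows "(\<integral>x. f (X11 x) * g (X22 x) \<partial>M) \<ge> (\<integral>y. f (Y11 y) \<partial>N) * (\<integral>y. g (Y22 y) \<partial>N)"
proof -
  note [measurable] = assms(3-6)
  have \<mu>1: "sigma_finite_measure \<mu>1" "sets \<mu>1 = sets borel" "AE U in \<mu>1. psd_mat U"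
    and \<mu>2: "sigma_finite_measure \<mu>2" "sets \<mu>2 = sets borel" "AE V in \<mu>2. psd_mat V"
    using assms(13,14) by (auto simp: mv_bernstein_sigma_finite mv_bernstein_sets pd_mat_imp_psd_mat
        elim!: AE_mp[OF mv_bernstein_AE_pd_mat])
  have [measurable]: "levy_integral \<mu>1 \<in> borel_measurable borel" "levy_integral \<mu>2 \<in> borel_measurable borel"
    using \<mu>1 \<mu>2 by (simp_all add: borel_measurable_levy_integral)
  have f_eq: "ennreal (f T) = ennreal (trace A1) + levy_integral \<mu>1 T" "0 \<le> f T" if "pd_mat T" for T
    using mv_bernstein_eq_levy_integral[OF assms(13) that] mv_bernstein_nonneg[OF assms(13) that] by simp_all
  have g_eq: "ennreal (g T) = ennreal (trace A2) + levy_integral \<mu>2 T" "0 \<le> g T" if "pd_mat T" for T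
    using mv_bernstein_eq_levy_integral[OF assms(14) that] mv_bernstein_nonneg[OF assms(14) that] by simp_all
  have psd_X: "\<forall>x\<in>space M. psd_mat (X11 x) \<and> psd_mat (X22 x)"
    and psd_Y: "\<forall>y\<in>space N. psd_mat (Y11 y) \<and> psd_mat (Y22 y)"
    using assms(7,8) by (simp_all add: pd_mat_imp_psd_mat)
  have "(\<integral>\<^sup>+y. ennreal (trace A1) + levy_integral \<mu>1 (Y11 y) \<partial>N) * (\<integral>\<^sup>+y. ennreal (trace A2) + levy_integral \<mu>2 (Y22 y) \<partial>N)
      \<le> (\<integral>\<^sup>+x. (ennreal (trace A1) + levy_integral \<mu>1 (X11 x)) * (ennreal (trace A2) + levy_integral \<mu>2 (X22 x)) \<partial>M)"
    using assms(1,2) levy_integral_product_ge[OF assms(1-6) psd_X psd_Y assms(9-12) \<mu>1 \<mu>2]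
    by (intro nn_integral_shifted_product_ge nn_integral_distr_eq[OF assms(9)] nn_integral_distr_eq[OF assms(10)])
      measurable
  then have "(\<integral>\<^sup>+y. ennreal (f (Y11 y)) \<partial>N) * (\<integral>\<^sup>+y. ennreal (g (Y22 y)) \<partial>N) \<le> (\<integral>\<^sup>+x. ennreal (f (X11 x) * g (X22 x)) \<partial>M)"
    using assms(7,8) by (simp add: f_eq g_eq ennreal_mult' cong: nn_integral_cong)
  then show ?thesis
    using assms(7,8,15-17) f_eq(2) g_eq(2)
    by (intro integral_mult_le_if_nn_integral_mult_le AE_I2) auto
qed

end
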